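(* Let $q>1$. There is no radially symmetric $u\in C^{4}(\mathbb{R}^{2})$, $u>0$, solving $\Delta^{2}u+u^{-q}=0$ in $\mathbb{R}^{2}$. *)

theory Defs
  imports "HOL-Analysis.Analysis"
begin

text \<open>The plane R^2 is modelled as real \<times> real (whose norm is the Euclidean norm).\<close>

definition pd1 :: "(real \<times> real \<Rightarrow> real) \<Rightarrow> real \<times> real \<Rightarrow> real" where
  "pd1 u = (\<lambda>(x, y). deriv (\<lambda>t. u (t, y)) x)"

definition pd2 :: "(real \<times> real \<Rightarrow> real) \<Rightarrow> real \<times> real \<Rightarrow> real" where
  "pd2 u = (\<lambda>(x, y). deriv (\<lambda>t. u (x, t)) y)"

fun Ck :: "nat \<Rightarrow> (real \<times> real \<Rightarrow> real) \<Rightarrow> bool" where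
  "Ck 0 u = continuous_on UNIV u"
| "Ck (Suc k) u = (continuous_on UNIV u \<and>
      (\<forall>x y. (\<lambda>t. u (t, y)) differentiable (at x) \<and> (\<lambda>t. u (x, t)) differentiable (at y)) \<and>
      Ck k (pd1 u) \<and> Ck k (pd2 u))"

definition laplacian :: "(real \<times> real \<Rightarrow> real) \<Rightarrow> real \<times> real \<Rightarrow> real" where
  "laplacian u = (\<lambda>p. pd1 (pd1 u) p + pd2 (pd2 u) p)"

definition radially_symmetric :: "(real \<times> real \<Rightarrow> real) \<Rightarrow> bool" where
  "radially_symmetric u \<longleftrightarrow> (\<forall>p p'. norm p = norm p' \<longrightarrow> u p = u p')"

end

(*
  Write u(x) = g(|x|) and h = g'' + g'/r for the profile of the Laplacian.  The equation gives
  h'' + h'/r = (r h')'/r < 0, and r h'(r) tends to 0 as r tends to 0 because h' is continuous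
  at the origin; hence r h'(r) <= -c < 0 for r >= 1, so h(r) <= h(1) - c ln r tends to -infinity.
  Then (r g')' = r h <= -r for large r, which gives g'(r) <= K/r - r/2 and g(r) -> -infinity,
  contradicting u > 0.  Only the sign of the right-hand side -u^(-q) is used.
*)
theory Submission
  imports Defs "HOL-Real_Asymp.Real_Asymp"
begin

lemma pd2_eq_pd1_swap: "pd2 f (x, y) = pd1 (\<lambda>(a, b). f (b, a)) (y, x)"
  by (simp add: pd1_def pd2_def)

lemma pd2_pd2_eq_pd1_pd1_swap: "pd2 (pd2 f) (x, y) = pd1 (pd1 (\<lambda>(a, b). f (b, a))) (y, x)"
proof -
  have "pd2 (pd2 f) (x, y) = deriv (\<lambda>t. pd2 f (x, t)) y"
    by (simp add: pd2_def[of "pd2 f"])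
  also have "\<dots> = deriv (\<lambda>t. pd1 (\<lambda>(a, b). f (b, a)) (t, x)) y"
    by (simp only: pd2_eq_pd1_swap)
  finally show ?thesis
    by (simp add: pd1_def[of "pd1 _"])
qed

lemma radially_symmetric_swap:
  assumes "radially_symmetric f"
  shows "(\<lambda>(a, b). f (b, a)) = f"
proof (intro ext, clarify)
  fix a b :: real
  have "norm (b, a) = norm (a, b)" by (simp add: norm_Pair add.commute)
  then show "f (b, a) = f (a, b)"
    using assms unfolding radially_symmetric_def by blast
qed

lemma laplacian_radially_symmetric_eq:
  "radially_symmetric f \<Longrightarrow> laplacian f (x, y) = pd1 (pd1 f) (x, y) + pd1 (pd1 f) (y, x)"
  by (simp add: laplacian_def pd2_pd2_eq_pd1_pd1_swap radially_symmetric_swap)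

lemma DERIV_norm_Pair:
  fixes s c :: real
  assumes "(s, c) \<noteq> 0"
  shows "((\<lambda>s. norm (s, c)) has_real_derivative s / norm (s, c)) (at s)"
proof -
  have "s^2 + c^2 > 0"
    using assms by (auto simp: zero_prod_def sum_power2_gt_zero_iff)
  then have "((\<lambda>s. sqrt (s^2 + c^2)) has_real_derivative inverse (sqrt (s^2 + c^2)) / 2 * (2 * s)) (at s)"
    by (auto intro!: derivative_eq_intros)
  then show ?thesis by (simp add: norm_Pair field_simps)
qed

lemma DERIV_radial_Pair:
  fixes g :: "real \<Rightarrow> real" and s c :: real
  assumes dg: "\<And>r. r > 0 \<Longrightarrow> (g has_real_derivative g' r) (at r)"
    and "(s, c) \<noteq> 0"
  shows "((\<lambda>s. g (norm (s, c))) has_real_derivative g' (norm (s, c)) * (s / norm (s, c))) (at s)"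
  using DERIV_chain2[OF dg DERIV_norm_Pair[OF assms(2)]] assms(2) by simp

lemma pd1_pd1_radial:
  fixes g g1 g2 :: "real \<Rightarrow> real"
  assumes f_eq: "\<And>p. f p = g (norm p)"
    and dg: "\<And>r. r > 0 \<Longrightarrow> (g has_real_derivative g1 r) (at r)"
    and dg1: "\<And>r. r > 0 \<Longrightarrow> (g1 has_real_derivative g2 r) (at r)"
    and "(x, y) \<noteq> 0"
  defines "\<rho> \<equiv> norm (x, y)"
  shows "pd1 (pd1 f) (x, y) = g2 \<rho> * x^2 / \<rho>^2 + g1 \<rho> * y^2 / \<rho>^3"
proof -
  have pd1_f: "pd1 f (s, y) = g1 (norm (s, y)) * s / norm (s, y)" if "(s, y) \<noteq> 0" for s
    using DERIV_radial_Pair[OF dg that] by (simp add: pd1_def f_eq DERIV_imp_deriv)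
  have "\<rho> > 0" "\<rho>^2 = x^2 + y^2"
    using \<open>(x, y) \<noteq> 0\<close> by (auto simp: \<rho>_def norm_Pair zero_prod_def sum_power2_gt_zero_iff)
  have "((\<lambda>s. g1 (norm (s, y)) * s / norm (s, y)) has_real_derivative
      g2 \<rho> * x^2 / \<rho>^2 + g1 \<rho> * (\<rho>^2 - x^2) / \<rho>^3) (at x)"
    using DERIV_radial_Pair[OF dg1 \<open>(x, y) \<noteq> 0\<close>] DERIV_norm_Pair[OF \<open>(x, y) \<noteq> 0\<close>]
      \<open>(x, y) \<noteq> 0\<close> \<open>\<rho> > 0\<close>
    by (auto intro!: derivative_eq_intros simp: \<rho>_def[symmetric] field_simps power2_eq_square power3_eq_cube)
  then have "((\<lambda>s. g1 (norm (s, y)) * s / norm (s, y)) has_real_derivative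
      g2 \<rho> * x^2 / \<rho>^2 + g1 \<rho> * y^2 / \<rho>^3) (at x)"
    using \<open>\<rho>^2 = x^2 + y^2\<close> by simp
  moreover have "open {s. (s, y) \<noteq> (0 :: real \<times> real)}"
    by (intro open_Collect_neq continuous_intros)
  ultimately have "((\<lambda>s. pd1 f (s, y)) has_real_derivative
      g2 \<rho> * x^2 / \<rho>^2 + g1 \<rho> * y^2 / \<rho>^3) (at x)"
    by (rule has_field_derivative_transform_within_open) (use \<open>(x, y) \<noteq> 0\<close> pd1_f in auto)
  then show ?thesis
    by (simp add: pd1_def[of "pd1 f"] DERIV_imp_deriv)
qed

lemma laplacian_radial:
  fixes g g1 g2 :: "real \<Rightarrow> real"
  assumes f_eq: "\<And>p. f p = g (norm p)"
    and dg: "\<And>r. r > 0 \<Longrightarrow> (g has_real_derivative g1 r) (at r)"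
    and dg1: "\<And>r. r > 0 \<Longrightarrow> (g1 has_real_derivative g2 r) (at r)"
    and "p \<noteq> 0"
  shows "laplacian f p = g2 (norm p) + g1 (norm p) / norm p"
proof -
  obtain x y where p: "p = (x, y)" by fastforce
  define \<rho> where "\<rho> = norm (x, y)"
  have "radially_symmetric f"
    by (simp add: radially_symmetric_def f_eq)
  have "(y, x) \<noteq> 0" "norm (y, x) = \<rho>"
    using \<open>p \<noteq> 0\<close> by (auto simp: p \<rho>_def zero_prod_def norm_Pair add.commute)
  have "\<rho> > 0" "\<rho>^2 = x^2 + y^2"
    using \<open>p \<noteq> 0\<close> by (auto simp: p \<rho>_def norm_Pair zero_prod_def sum_power2_gt_zero_iff)
  have "laplacian f p = pd1 (pd1 f) (x, y) + pd1 (pd1 f) (y, x)"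
    using laplacian_radially_symmetric_eq[OF \<open>radially_symmetric f\<close>] p by simp
  also have "\<dots> = g2 \<rho> * (x^2 + y^2) / \<rho>^2 + g1 \<rho> * (x^2 + y^2) / \<rho>^3"
    using pd1_pd1_radial[OF f_eq dg dg1] \<open>p \<noteq> 0\<close> \<open>(y, x) \<noteq> 0\<close> \<open>norm (y, x) = \<rho>\<close>
    by (simp add: p \<rho>_def add_divide_distrib distrib_left)
  also have "\<dots> = g2 \<rho> + g1 \<rho> / \<rho>"
    using \<open>\<rho> > 0\<close> unfolding \<open>\<rho>^2 = x^2 + y^2\<close>[symmetric]
    by (simp add: power2_eq_square power3_eq_cube)
  finally show ?thesis by (simp add: p \<rho>_def)
qed

lemma radially_symmetric_eq_axis:
  assumes "radially_symmetric f"
  shows "f p = f (norm p, 0)"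
proof -
  have "norm (norm p, 0 :: real) = norm p"
    by (simp add: norm_Pair)
  then show ?thesis
    using assms unfolding radially_symmetric_def by metis
qed

lemma Ck_imp_continuous_on_axis: "Ck k f \<Longrightarrow> continuous_on S (\<lambda>t. f (t, y))"
  by (cases k) (auto intro!: continuous_on_compose2[of UNIV f] continuous_intros)

lemma Ck_Suc_DERIV_pd1:
  "Ck (Suc k) f \<Longrightarrow> ((\<lambda>t. f (t, y)) has_real_derivative pd1 f (t, y)) (at t)"
  by (auto simp: pd1_def DERIV_deriv_iff_real_differentiable)

lemma Ck_Suc_pd1: "Ck (Suc k) f \<Longrightarrow> Ck k (pd1 f)"
  by simp

lemma Ck_add: "Ck k f \<Longrightarrow> Ck k g \<Longrightarrow> Ck k (\<lambda>p. f p + g p)"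
proof (induction k arbitrary: f g)
  case 0
  then show ?case by (auto intro: continuous_on_add)
next
  case (Suc k)
  have "pd1 (\<lambda>p. f p + g p) = (\<lambda>p. pd1 f p + pd1 g p)"
    using Suc.prems
    by (intro ext) (auto simp: pd1_def DERIV_deriv_iff_real_differentiable intro!: DERIV_imp_deriv DERIV_add)
  moreover have "pd2 (\<lambda>p. f p + g p) = (\<lambda>p. pd2 f p + pd2 g p)"
    using Suc.prems
    by (intro ext) (auto simp: pd2_def DERIV_deriv_iff_real_differentiable intro!: DERIV_imp_deriv DERIV_add)
  ultimately show ?case
    using Suc by (auto intro: continuous_on_add)
qed

lemma Ck_laplacian: "Ck (Suc (Suc k)) f \<Longrightarrow> Ck k (laplacian f)"
  unfolding laplacian_def by (intro Ck_add) simp_all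

lemma Ck_radially_symmetric_laplacian:
  assumes f: "Ck (Suc (Suc k)) f" and rs: "radially_symmetric f"
  shows "radially_symmetric (laplacian f)"
    and "\<And>r. r > 0 \<Longrightarrow> laplacian f (r, 0) = pd1 (pd1 f) (r, 0) + pd1 f (r, 0) / r"
proof -
  have lap: "laplacian f p = pd1 (pd1 f) (norm p, 0) + pd1 f (norm p, 0) / norm p" if "p \<noteq> 0" for p
    using laplacian_radial[OF radially_symmetric_eq_axis[OF rs] Ck_Suc_DERIV_pd1[OF f]
        Ck_Suc_DERIV_pd1[OF Ck_Suc_pd1[OF f]] that] .
  show "radially_symmetric (laplacian f)"
    unfolding radially_symmetric_def by (metis lap norm_eq_zero)
  show "laplacian f (r, 0) = pd1 (pd1 f) (r, 0) + pd1 f (r, 0) / r" if "r > 0" for r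
    using lap[of "(r, 0)"] that by (simp add: zero_prod_def)
qed

lemma DERIV_le_imp_diff_le:
  fixes f k :: "real \<Rightarrow> real"
  assumes "a \<le> b"
    and "\<And>x. a \<le> x \<Longrightarrow> x \<le> b \<Longrightarrow> (f has_real_derivative f' x) (at x)"
    and "\<And>x. a \<le> x \<Longrightarrow> x \<le> b \<Longrightarrow> (k has_real_derivative k' x) (at x)"
    and "\<And>x. a \<le> x \<Longrightarrow> x \<le> b \<Longrightarrow> f' x \<le> k' x"
  shows "f b - f a \<le> k b - k a"
proof -
  have "(\<lambda>x. f x - k x) b \<le> (\<lambda>x. f x - k x) a"
  proof (rule DERIV_nonpos_imp_nonincreasing[OF assms(1)])
    fix x assume "a \<le> x" "x \<le> b"
    then show "\<exists>y. ((\<lambda>x. f x - k x) has_real_derivative y) (at x) \<and> y \<le> 0"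
      using assms(2-4) by (intro exI[of _ "f' x - k' x"] conjI DERIV_diff) auto
  qed
  then show ?thesis by simp
qed

lemma filterlim_at_bot_if_DERIV_le:
  fixes f k :: "real \<Rightarrow> real"
  assumes "\<And>x. a \<le> x \<Longrightarrow> (f has_real_derivative f' x) (at x)"
    and "\<And>x. a \<le> x \<Longrightarrow> (k has_real_derivative k' x) (at x)"
    and "\<And>x. a \<le> x \<Longrightarrow> f' x \<le> k' x"
    and "filterlim k at_bot at_top"
  shows "filterlim f at_bot at_top"
proof (rule filterlim_at_bot_mono)
  show "filterlim (\<lambda>x. k x + (f a - k a)) at_bot at_top"
    using filterlim_tendsto_add_at_bot_iff[OF tendsto_const, of "f a - k a" k] assms(4)
    by (simp add: add.commute)
  have "f x \<le> k x + (f a - k a)" if "a \<le> x" for x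
    using DERIV_le_imp_diff_le[OF that assms(1-3)] by simp
  then show "\<forall>\<^sub>F x in at_top. f x \<le> k x + (f a - k a)"
    by (rule eventually_mono[OF eventually_ge_at_top[of a]])
qed

lemma radial_superharmonic_filterlim_at_bot:
  fixes h h1 h2 :: "real \<Rightarrow> real"
  assumes dh: "\<And>r. r > 0 \<Longrightarrow> (h has_real_derivative h1 r) (at r)"
    and dh1: "\<And>r. r > 0 \<Longrightarrow> (h1 has_real_derivative h2 r) (at r)"
    and superharmonic: "\<And>r. r > 0 \<Longrightarrow> h2 r + h1 r / r < 0"
    and h1_cont: "continuous_on {0..1} h1"
  shows "filterlim h at_bot at_top"
proof -
  define flux where "flux r = r * h1 r" for r
  have flux_decreasing: "flux b < flux a" if "0 < a" "a < b" for a b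
  proof (rule DERIV_neg_imp_decreasing[OF that(2)])
    fix x assume "a \<le> x" "x \<le> b"
    with that have "x > 0" by simp
    have "(flux has_real_derivative h1 x + x * h2 x) (at x)"
      unfolding flux_def by (auto intro!: derivative_eq_intros dh1[OF \<open>x > 0\<close>])
    moreover have "h1 x + x * h2 x = x * (h2 x + h1 x / x)"
      using \<open>x > 0\<close> by (simp add: field_simps)
    ultimately show "\<exists>y. (flux has_real_derivative y) (at x) \<and> y < 0"
      using superharmonic[OF \<open>x > 0\<close>] \<open>x > 0\<close> by (metis mult_pos_neg)
  qed
  have "(h1 \<longlongrightarrow> h1 0) (at_right 0)"
    using h1_cont by (auto simp: continuous_on_def at_within_Icc_at_right dest: bspec[of _ _ 0])
  then have "(flux \<longlongrightarrow> 0) (at_right 0)"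
    unfolding flux_def using tendsto_mult[OF tendsto_ident_at] by fastforce
  moreover have "\<forall>\<^sub>F r in at_right 0. flux (1/2) \<le> flux r"
    unfolding eventually_at_right_field
    by (rule exI[of _ "1/2"]) (auto intro!: less_imp_le flux_decreasing)
  ultimately have "flux (1/2) \<le> 0"
    by (rule tendsto_lowerbound) simp
  then have flux1: "flux 1 < 0"
    using flux_decreasing[of "1/2" 1] by simp
  show ?thesis
  proof (rule filterlim_at_bot_if_DERIV_le)
    fix r :: real assume "1 \<le> r"
    then show "(h has_real_derivative h1 r) (at r)" using dh by simp
    show "((\<lambda>r. flux 1 * ln r) has_real_derivative flux 1 / r) (at r)"
      using \<open>1 \<le> r\<close> by (auto intro!: derivative_eq_intros)
    have "flux r \<le> flux 1"
      using \<open>1 \<le> r\<close> flux_decreasing[of 1 r] by (cases "r = 1") auto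
    then show "h1 r \<le> flux 1 / r"
      using \<open>1 \<le> r\<close> by (simp add: flux_def field_simps)
  next
    show "filterlim (\<lambda>r. flux 1 * ln r) at_bot at_top"
      using flux1 by real_asymp
  qed
qed

lemma radial_laplacian_filterlim_at_bot:
  fixes g g1 g2 :: "real \<Rightarrow> real"
  assumes dg: "\<And>r. r > 0 \<Longrightarrow> (g has_real_derivative g1 r) (at r)"
    and dg1: "\<And>r. r > 0 \<Longrightarrow> (g1 has_real_derivative g2 r) (at r)"
    and lap: "filterlim (\<lambda>r. g2 r + g1 r / r) at_bot at_top"
  shows "filterlim g at_bot at_top"
proof -
  have "\<forall>\<^sub>F r in at_top. r \<ge> 1 \<and> g2 r + g1 r / r \<le> -1"
    using lap[unfolded filterlim_at_bot, rule_format, of "-1"] eventually_ge_at_top[of 1]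
    by (intro eventually_conj)
  then obtain R where R1: "R \<ge> 1" and lap_R: "\<And>r. r \<ge> R \<Longrightarrow> g2 r + g1 r / r \<le> -1"
    by (auto simp: eventually_at_top_linorder)
  define K where "K = R * g1 R + R^2 / 2"
  have g1_bound: "g1 r \<le> K / r - r / 2" if "R \<le> r" for r
  proof -
    have "r * g1 r + r^2 / 2 \<le> R * g1 R + R^2 / 2"
    proof (rule DERIV_nonpos_imp_nonincreasing[OF that, of "\<lambda>x. x * g1 x + x^2 / 2"])
      fix x assume "R \<le> x" "x \<le> r"
      with R1 have "x > 0" by simp
      have "((\<lambda>x. x * g1 x + x^2 / 2) has_real_derivative x * (g2 x + g1 x / x) + x) (at x)"
        using \<open>x > 0\<close>
        by (auto intro!: derivative_eq_intros dg1[OF \<open>x > 0\<close>] simp: field_simps)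
      moreover have "x * (g2 x + g1 x / x) \<le> x * -1"
        using lap_R[OF \<open>R \<le> x\<close>] \<open>x > 0\<close> by (metis less_imp_le mult_left_mono)
      ultimately show "\<exists>y. ((\<lambda>x. x * g1 x + x^2 / 2) has_real_derivative y) (at x) \<and> y \<le> 0"
        by auto
    qed
    then show ?thesis
      using that R1 by (simp add: K_def field_simps power2_eq_square)
  qed
  show ?thesis
  proof (rule filterlim_at_bot_if_DERIV_le)
    fix r :: real assume "R \<le> r"
    with R1 have "r > 0" by simp
    then show "(g has_real_derivative g1 r) (at r)" using dg by simp
    show "((\<lambda>r. K * ln r - r^2 / 4) has_real_derivative K / r - r / 2) (at r)"
      using \<open>r > 0\<close> by (auto intro!: derivative_eq_intros)
    show "g1 r \<le> K / r - r / 2" using g1_bound[OF \<open>R \<le> r\<close>] .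
  next
    show "filterlim (\<lambda>r. K * ln r - r^2 / 4) at_bot at_top" by real_asymp
  qed
qed

lemma no_positive_radial_biharmonic_supersolution:
  fixes g g1 g2 h h1 h2 :: "real \<Rightarrow> real"
  assumes pos: "\<And>r. r > 0 \<Longrightarrow> g r > 0"
    and dg: "\<And>r. r > 0 \<Longrightarrow> (g has_real_derivative g1 r) (at r)"
    and dg1: "\<And>r. r > 0 \<Longrightarrow> (g1 has_real_derivative g2 r) (at r)"
    and lap: "\<And>r. r > 0 \<Longrightarrow> h r = g2 r + g1 r / r"
    and dh: "\<And>r. r > 0 \<Longrightarrow> (h has_real_derivative h1 r) (at r)"
    and dh1: "\<And>r. r > 0 \<Longrightarrow> (h1 has_real_derivative h2 r) (at r)"
    and superharmonic: "\<And>r. r > 0 \<Longrightarrow> h2 r + h1 r / r < 0"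
    and h1_cont: "continuous_on {0..1} h1"
  shows False
proof -
  have "\<forall>\<^sub>F r in at_top. h r = g2 r + g1 r / r"
    using eventually_gt_at_top[of 0] by eventually_elim (rule lap)
  moreover have "filterlim h at_bot at_top"
    using dh dh1 superharmonic h1_cont by (rule radial_superharmonic_filterlim_at_bot)
  ultimately have "filterlim (\<lambda>r. g2 r + g1 r / r) at_bot at_top"
    using filterlim_cong[OF refl refl, of h "\<lambda>r. g2 r + g1 r / r" at_top at_bot] by simp
  with dg dg1 have "filterlim g at_bot at_top"
    by (rule radial_laplacian_filterlim_at_bot)
  then have "\<forall>\<^sub>F r in at_top. g r < 0"
    by (simp add: filterlim_at_bot_dense)
  moreover have "\<forall>\<^sub>F r in at_top. g r > 0"
    using eventually_gt_at_top[of 0] by eventually_elim (rule pos)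
  ultimately have "\<forall>\<^sub>F r in at_top. g r < 0 \<and> g r > 0"
    by (rule eventually_conj)
  then show False
    by (auto dest: eventually_happens'[OF trivial_limit_at_top_linorder])
qed

lemma no_positive_radial_Ck4_biharmonic_supersolution:
  assumes "Ck 4 u" and rs: "radially_symmetric u" and pos: "\<And>p. u p > 0"
    and superharmonic: "\<And>p. laplacian (laplacian u) p < 0"
  shows False
proof -
  have "(4::nat) = Suc (Suc (Suc (Suc 0)))" by simp
  with \<open>Ck 4 u\<close> have u4: "Ck (Suc (Suc (Suc (Suc 0)))) u" by (simp only:)
  define v where "v = laplacian u"
  have v2: "Ck (Suc (Suc 0)) v"
    unfolding v_def using u4 by (rule Ck_laplacian)
  have lap_u: "radially_symmetric v" "\<And>r. r > 0 \<Longrightarrow> v (r, 0) = pd1 (pd1 u) (r, 0) + pd1 u (r, 0) / r"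
    unfolding v_def by (fact Ck_radially_symmetric_laplacian[OF u4 rs])+
  have lap_v: "pd1 (pd1 v) (r, 0) + pd1 v (r, 0) / r < 0" if "r > 0" for r
    using superharmonic[of "(r, 0)"] Ck_radially_symmetric_laplacian(2)[OF v2 lap_u(1) that]
    unfolding v_def by simp
  show False
    by (rule no_positive_radial_biharmonic_supersolution[of "\<lambda>r. u (r, 0)" "\<lambda>r. pd1 u (r, 0)"
        "\<lambda>r. pd1 (pd1 u) (r, 0)" "\<lambda>r. v (r, 0)" "\<lambda>r. pd1 v (r, 0)" "\<lambda>r. pd1 (pd1 v) (r, 0)"])
      (simp_all add: pos lap_u(2) lap_v Ck_Suc_DERIV_pd1[OF u4] Ck_Suc_DERIV_pd1[OF Ck_Suc_pd1[OF u4]]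
        Ck_Suc_DERIV_pd1[OF v2] Ck_Suc_DERIV_pd1[OF Ck_Suc_pd1[OF v2]]
        Ck_imp_continuous_on_axis[OF Ck_Suc_pd1[OF v2]])
qed

theorem mainTheorem19:
  fixes q :: real
  assumes "q > 1"
  shows "\<not> (\<exists>u :: real \<times> real \<Rightarrow> real.
            Ck 4 u \<and> radially_symmetric u \<and> (\<forall>p. u p > 0) \<and>
            (\<forall>p. laplacian (laplacian u) p + u p powr (- q) = 0))"
proof
  assume "\<exists>u :: real \<times> real \<Rightarrow> real.
            Ck 4 u \<and> radially_symmetric u \<and> (\<forall>p. u p > 0) \<and>
            (\<forall>p. laplacian (laplacian u) p + u p powr (- q) = 0)"
  then obtain u :: "real \<times> real \<Rightarrow> real" where u: "Ck 4 u" "radially_symmetric u" "\<And>p. u p > 0"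
    and pde: "\<And>p. laplacian (laplacian u) p + u p powr (- q) = 0" by blast
  have "laplacian (laplacian u) p < 0" for p
  proof -
    have "u p powr (- q) > 0"
      using u(3)[of p] by simp
    then show ?thesis
      using pde[of p] by linarith
  qed
  with u show False
    by (rule no_positive_radial_Ck4_biharmonic_supersolution)
qed

end
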